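(* Let $n$ be a positive integer and let $\pi\subseteq\mathbb{Z}^2$ be a hexagonal permutation with $n$ dots. Then there exist an integer $i$ with $0\le i\le n-1$ and a translation vector $(a,b)\in\mathbb{Z}^2$ such that every dot of $\pi$ lies in $(a,b)+S_i(n)$, where $$S_i(n)=\{(x,y)\in\mathbb{Z}^2:\ 0\le x\le n-1,\ 0\le y\le n-1,\ -i\le x-y\le n-1-i\}.$$
   Context: Cells of the hexagonal grid are represented by cells $(x,y)\in\mathbb{Z}^2$ of the square grid (cell $(x,y)$ adjacent to $(x\pm1,y)$, $(x,y\pm1)$, $(x+1,y+1)$, $(x-1,y-1)$). The three families of "rows" are the rows $\{y=c\}$, the columns $\{x=c\}$ and the standard diagonals $\{x-y=c\}$, $c\in\mathbb{Z}$; lines of the same family are consecutive if their constants differ by $1$. A hexagonal permutation with $n$ dots is a set $\pi$ of $n$ cells such that, for each of the three families, the lines of that family containing a dot of $\pi$ are exactly $n$ consecutive lines, each containing exactly one dot of $\pi$. (Equivalently, $S_i(n)$, $0\le i\le n-1$, are the intersections of an $n\times n$ square with $n$ consecutive standard diagonals each meeting the square.) *)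

theory Defs
  imports Main
begin

text \<open>A family of lines is given by a function assigning to each cell the constant
of the line of that family containing it: rows y = c, columns x = c,
standard diagonals x - y = c.\<close>

definition consecutive_one_each :: "((int \<times> int) \<Rightarrow> int) \<Rightarrow> (int \<times> int) set \<Rightarrow> nat \<Rightarrow> bool" where
  "consecutive_one_each f P n \<longleftrightarrow>
     (\<exists>c. f ` P = {c .. c + int n - 1}) \<and> (\<forall>c \<in> f ` P. card {p \<in> P. f p = c} = 1)"

definition hex_perm :: "(int \<times> int) set \<Rightarrow> nat \<Rightarrow> bool" where
  "hex_perm P n \<longleftrightarrow> finite P \<and> card P = n \<and>
     consecutive_one_each snd P n \<and>
     consecutive_one_each fst P n \<and>
     consecutive_one_each (\<lambda>(x, y). x - y) P n"

definition S_set :: "nat \<Rightarrow> nat \<Rightarrow> (int \<times> int) set" where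
  "S_set n i = {(x, y). 0 \<le> x \<and> x \<le> int n - 1 \<and> 0 \<le> y \<and> y \<le> int n - 1 \<and>
                       - int i \<le> x - y \<and> x - y \<le> int n - 1 - int i}"

end

theory Submission
  imports Defs
begin

text \<open>Let the dots of \<open>P\<close> occupy the columns \<open>a..a+n-1\<close>, the rows \<open>b..b+n-1\<close> and the
diagonals \<open>d..d+n-1\<close>. Since each line of a family carries exactly one dot, summing the
constants of the lines over the dots gives \<open>n c + (0 + 1 + \<dots> + (n-1))\<close> for each family
(\<open>c = a, b, d\<close>). As the diagonal constant is \<open>x - y\<close>, these sums satisfy
\<open>n d + T = (n a + T) - (n b + T)\<close>, i.e. \<open>n (a - b - d) = T = n(n-1)/2\<close>. Hence
\<open>i = a - b - d\<close> lies in \<open>0..n-1\<close>, and the translate of \<open>P\<close> by \<open>(-a, -b)\<close> lies in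
\<open>S_set n i\<close>.\<close>

lemma inj_on_if_consecutive_one_each:
  assumes "consecutive_one_each f P n"
  shows "inj_on f P"
proof (rule inj_onI)
  fix p q assume pq: "p \<in> P" "q \<in> P" "f p = f q"
  have "card {r \<in> P. f r = f q} = 1"
    using assms pq unfolding consecutive_one_each_def by auto
  then obtain z where "{r \<in> P. f r = f q} = {z}" by (auto simp: card_Suc_eq)
  then have "p \<in> {z}" "q \<in> {z}" using pq by blast+
  then show "p = q" by simp
qed

lemma sum_int_atLeastAtMost:
  "(\<Sum>k\<in>{c..c + int n - 1}. k) = int n * c + (\<Sum>j<n. int j)"
proof (induction n)
  case 0
  then show ?case by simp
next
  case (Suc n)
  have "{c..c + int (Suc n) - 1} = insert (c + int n) {c..c + int n - 1}" by auto
  then show ?case using Suc by (simp add: algebra_simps)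
qed

lemma consecutive_one_each_sum:
  assumes "consecutive_one_each f P n"
  obtains c where "f ` P = {c..c + int n - 1}" and "sum f P = int n * c + (\<Sum>j<n. int j)"
proof -
  obtain c where c: "f ` P = {c..c + int n - 1}"
    using assms unfolding consecutive_one_each_def by auto
  have "sum f P = (\<Sum>k\<in>f ` P. k)"
    using sum.reindex[OF inj_on_if_consecutive_one_each[OF assms], of "\<lambda>k. k"] by simp
  also have "\<dots> = int n * c + (\<Sum>j<n. int j)"
    unfolding c by (rule sum_int_atLeastAtMost)
  finally show thesis using that c by blast
qed

lemma hex_perm_line_ranges:
  assumes "hex_perm P n"
  obtains a b d where "fst ` P = {a..a + int n - 1}" and "snd ` P = {b..b + int n - 1}"
    and "(\<lambda>(x, y). x - y) ` P = {d..d + int n - 1}"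
    and "int n * (a - b - d) = (\<Sum>j<n. int j)"
proof -
  obtain a where a: "fst ` P = {a..a + int n - 1}" "sum fst P = int n * a + (\<Sum>j<n. int j)"
    using assms consecutive_one_each_sum unfolding hex_perm_def by metis
  obtain b where b: "snd ` P = {b..b + int n - 1}" "sum snd P = int n * b + (\<Sum>j<n. int j)"
    using assms consecutive_one_each_sum unfolding hex_perm_def by metis
  obtain d where d: "(\<lambda>(x, y). x - y) ` P = {d..d + int n - 1}"
      "sum (\<lambda>(x, y). x - y) P = int n * d + (\<Sum>j<n. int j)"
    using assms consecutive_one_each_sum unfolding hex_perm_def by metis
  have "sum (\<lambda>(x, y). x - y) P = sum fst P - sum snd P"
    by (simp add: case_prod_unfold sum_subtractf)
  then have "int n * (a - b - d) = (\<Sum>j<n. int j)"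
    using a(2) b(2) d(2) by (simp add: algebra_simps)
  then show thesis using that a(1) b(1) d(1) by blast
qed

lemma mult_eq_sum_lessThan_bounds:
  assumes "n \<ge> 1" and "int n * k = (\<Sum>j<n. int j)"
  shows "0 \<le> k" and "k \<le> int n - 1"
proof -
  have "0 \<le> (\<Sum>j<n. int j)" by (simp add: sum_nonneg)
  moreover have "(\<Sum>j<n. int j) \<le> (\<Sum>j<n. int n - 1)" by (rule sum_mono) auto
  ultimately have "0 \<le> int n * k" "int n * k \<le> int n * (int n - 1)"
    using assms(2) by simp_all
  moreover have "int n > 0" using assms(1) by simp
  ultimately show "0 \<le> k" "k \<le> int n - 1"
    by (simp_all add: zero_le_mult_iff)
qed

theorem lemma3:
  fixes P :: "(int \<times> int) set" and n :: nat
  assumes "n \<ge> 1" and "hex_perm P n"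
  shows "\<exists>i < n. \<exists>a b :: int. \<forall>(x, y) \<in> P. (x - a, y - b) \<in> S_set n i"
proof -
  obtain a b d where a: "fst ` P = {a..a + int n - 1}" and b: "snd ` P = {b..b + int n - 1}"
    and d: "(\<lambda>(x, y). x - y) ` P = {d..d + int n - 1}"
    and offset: "int n * (a - b - d) = (\<Sum>j<n. int j)"
    using hex_perm_line_ranges[OF assms(2)] by blast
  define i where "i = nat (a - b - d)"
  have i: "int i = a - b - d" "i < n"
    using mult_eq_sum_lessThan_bounds[OF assms(1) offset] unfolding i_def by linarith+
  have "(x - a, y - b) \<in> S_set n i" if "(x, y) \<in> P" for x y
  proof -
    have "x \<in> fst ` P" "y \<in> snd ` P" "x - y \<in> (\<lambda>(x, y). x - y) ` P"
      using that by force+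
    then show ?thesis using a b d i(1) unfolding S_set_def by auto
  qed
  then show ?thesis using i(2) by blast
qed

end
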